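(* Let $3 \le k \le n$ and break the segment $[0,1]$ at $n-1$ independent uniformly random points into $n$ pieces. For every integer $m$ with $0 \le m \le \binom{n}{k}$, the probability that exactly $m$ of the $k$-element subsets of the $n$ pieces can form a $k$-gon is nonzero. Equivalently, $P(k,n,0) > 0$ and $P(k,n,m-1) - P(k,n,m) > 0$ for all $0 < m \le \binom nk$, where $P(k,n,m)$ is the probability that at least $m$ of the $k$-element subsets of pieces can form a $k$-gon.
   Context: A collection of $k$ lengths can form a (nondegenerate) $k$-gon iff each length is less than the sum of the other $k-1$. *)

theory Defs
  imports "HOL-Probability.Probability"
begin

definition break_points_measure :: "nat \<Rightarrow> (nat \<Rightarrow> real) measure" where
  "break_points_measure n = PiM {..<n-1} (\<lambda>_. uniform_measure lborel {0..1::real})"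

definition pieces :: "nat \<Rightarrow> (nat \<Rightarrow> real) \<Rightarrow> nat \<Rightarrow> real" where
  "pieces n x i = (let L = 0 # sort (map x [0..<n-1]) @ [1] in L ! Suc i - L ! i)"

definition forms_polygon :: "(nat \<Rightarrow> real) \<Rightarrow> nat set \<Rightarrow> bool" where
  "forms_polygon len S \<longleftrightarrow> (\<forall>i\<in>S. len i < (\<Sum>j\<in>S - {i}. len j))"

definition num_polygons :: "nat \<Rightarrow> nat \<Rightarrow> (nat \<Rightarrow> real) \<Rightarrow> nat" where
  "num_polygons k n x = card {S. S \<subseteq> {..<n} \<and> card S = k \<and> forms_polygon (pieces n x) S}"

end

theory Submission
  imports Defs "HOL-Library.Nat_Bijection"
begin

text \<open>
  It suffices to find a box of break points of positive volume on which exactly m of the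
  k-sets of pieces form polygons. Take positive integer lengths l_0, ..., l_(n-1) such that
  exactly m k-sets S satisfy 2 l_i < (sum of l over S) for all i in S, while every other k-set
  has an i with 2 l_i > (sum of l over S). Both kinds of inequality hold with integer slack,
  so they survive when each piece differs from l_i / (sum of all l) by a small multiple of
  1 / (k * sum of all l); this is the case on a box around the normalized partial sums of l.

  For the lengths choose q with C(q,k) \<le> m \<le> C(q+1,k) = C(q,k) + C(q,k-1). The first q
  pieces are nearly equal, so any k of them form a polygon. Piece q is tuned so that it forms a
  polygon with a (k-1)-set T of the first q pieces exactly when set_encode T is above a
  threshold, chosen to admit m - C(q,k) such sets. All later pieces are superincreasing, so no
  polygon contains one of them.
\<close>

lemma sorted_nth_le_iff:
  fixes ys :: "'a::linorder list"
  assumes "sorted ys" "j < length ys"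
  shows "ys ! j \<le> t \<longleftrightarrow> j < card {i. i < length ys \<and> ys ! i \<le> t}"
proof
  assume "ys ! j \<le> t"
  then have "{..j} \<subseteq> {i. i < length ys \<and> ys ! i \<le> t}"
    using assms by (auto intro: order_trans sorted_nth_mono)
  from card_mono[OF _ this] show "j < card {i. i < length ys \<and> ys ! i \<le> t}" by simp
next
  assume j: "j < card {i. i < length ys \<and> ys ! i \<le> t}"
  show "ys ! j \<le> t"
  proof (rule ccontr)
    assume "\<not> ys ! j \<le> t"
    then have "{i. i < length ys \<and> ys ! i \<le> t} \<subseteq> {..<j}"
      using assms by (auto simp: not_less[symmetric] dest: sorted_nth_mono[of ys j] intro: order_trans)
    from card_mono[OF _ this] j show False by simp
  qed
qed

lemma sort_nth_le_iff:
  fixes xs :: "'a::linorder list"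
  assumes "j < length xs"
  shows "sort xs ! j \<le> t \<longleftrightarrow> j < length (filter (\<lambda>v. v \<le> t) xs)"
proof -
  have "length (filter (\<lambda>v. v \<le> t) xs) = length (filter (\<lambda>v. v \<le> t) (sort xs))"
    by (metis mset_filter mset_sort size_mset)
  then show ?thesis
    using sorted_nth_le_iff[of "sort xs" j t] assms by (simp add: length_filter_conv_card)
qed

lemma borel_measurable_sort_nth:
  fixes f :: "nat \<Rightarrow> 'a \<Rightarrow> real"
  assumes f: "\<And>r. r < N \<Longrightarrow> f r \<in> borel_measurable M" and "j < N"
  shows "(\<lambda>x. sort (map (\<lambda>r. f r x) [0..<N]) ! j) \<in> borel_measurable M"
  unfolding borel_measurable_iff_le
proof
  fix t :: real
  have "{x \<in> space M. sort (map (\<lambda>r. f r x) [0..<N]) ! j \<le> t}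
      = {x \<in> space M. j < (\<Sum>r<N. of_bool (f r x \<le> t))}"
    using \<open>j < N\<close> by (simp add: sort_nth_le_iff length_filter_conv_card lessThan_def Int_def cong: conj_cong)
  also have "\<dots> \<in> sets M"
    using f by measurable
  finally show "{x \<in> space M. sort (map (\<lambda>r. f r x) [0..<N]) ! j \<le> t} \<in> sets M" .
qed

lemma borel_measurable_pieces:
  assumes "i < n"
  shows "(\<lambda>x. pieces n x i) \<in> borel_measurable (break_points_measure n)"
proof -
  have nth_measurable: "(\<lambda>x. (0 # sort (map x [0..<n-1]) @ [1]) ! j) \<in> borel_measurable (break_points_measure n)"
    if "j \<le> n" for j
  proof -
    consider "j = 0" | "0 < j" "j < n" | "j = n" "0 < n" using \<open>j \<le> n\<close> by linarith
    then show ?thesis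
    proof cases
      case 2
      then have "j - 1 < n - 1" by linarith
      moreover have "(\<lambda>x. sort (map (\<lambda>r. x r) [0..<n-1]) ! (j - 1)) \<in> borel_measurable (break_points_measure n)"
        by (rule borel_measurable_sort_nth) (use 2 in \<open>auto simp: break_points_measure_def\<close>)
      ultimately show ?thesis using 2 by (simp add: nth_append nth_Cons')
    qed (auto simp: nth_append nth_Cons')
  qed
  show ?thesis
    unfolding pieces_def Let_def using assms by (intro borel_measurable_diff nth_measurable) auto
qed

lemma num_polygons_eq_sum_of_bool:
  "num_polygons k n x = (\<Sum>S\<in>{S. S \<subseteq> {..<n} \<and> card S = k}. of_bool (forms_polygon (pieces n x) S))"
  unfolding num_polygons_def by (simp add: Int_def conj_assoc)

lemma sets_num_polygons_eq:
  "{x \<in> space (break_points_measure n). num_polygons k n x = m} \<in> sets (break_points_measure n)"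
proof -
  have "Measurable.pred (break_points_measure n) (\<lambda>x. forms_polygon (pieces n x) S)"
    if "S \<subseteq> {..<n}" for S
  proof -
    have [measurable]: "i \<in> S \<Longrightarrow> (\<lambda>x. pieces n x i) \<in> borel_measurable (break_points_measure n)" for i
      using that by (intro borel_measurable_pieces) auto
    show ?thesis
      using finite_subset[OF that] unfolding forms_polygon_def by measurable
  qed
  then show ?thesis
    unfolding num_polygons_eq_sum_of_bool by measurable
qed

lemma prob_space_uniform_unit_interval: "prob_space (uniform_measure lborel {0..1::real})"
  by (rule prob_space_uniform_measure) auto

lemma prob_space_break_points_measure: "prob_space (break_points_measure n)"
  unfolding break_points_measure_def by (intro prob_space_PiM prob_space_uniform_unit_interval)

lemma measure_break_points_box_pos:
  assumes "\<And>i. i < n - 1 \<Longrightarrow> 0 \<le> a i \<and> a i < b i \<and> b i \<le> 1"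
  shows "0 < measure (break_points_measure n) (PiE {..<n-1} (\<lambda>i. {a i..b i}))"
proof -
  interpret product_prob_space "\<lambda>_. uniform_measure lborel {0..1::real}"
    by (simp add: product_prob_space_def product_prob_space_axioms_def product_sigma_finite_def
        prob_space_uniform_unit_interval prob_space_imp_sigma_finite)
  have "emeasure (break_points_measure n) (PiE {..<n-1} (\<lambda>i. {a i..b i}))
      = (\<Prod>i<n-1. emeasure (uniform_measure lborel {0..1::real}) {a i..b i})"
    unfolding break_points_measure_def by (rule emeasure_PiM) auto
  also have "\<dots> = (\<Prod>i<n-1. ennreal (b i - a i))"
  proof (rule prod.cong)
    fix i assume "i \<in> {..<n-1}"
    with assms[of i] have "{0..1::real} \<inter> {a i..b i} = {a i..b i}" by auto
    with assms[of i] \<open>i \<in> {..<n-1}\<close>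
    show "emeasure (uniform_measure lborel {0..1::real}) {a i..b i} = ennreal (b i - a i)"
      by (simp add: divide_ennreal_def)
  qed simp
  also have "\<dots> = ennreal (\<Prod>i<n-1. b i - a i)"
    using assms by (intro prod_ennreal) (auto simp: less_imp_le)
  finally have "emeasure (break_points_measure n) (PiE {..<n-1} (\<lambda>i. {a i..b i}))
      = ennreal (\<Prod>i<n-1. b i - a i)" .
  moreover have "0 < (\<Prod>i<n-1. b i - a i)"
    using assms by (intro prod_pos) auto
  ultimately show ?thesis
    by (simp add: measure_def)
qed

lemma forms_polygon_iff:
  "finite S \<Longrightarrow> forms_polygon p S \<longleftrightarrow> (\<forall>i\<in>S. 2 * p i < sum p S)"
  unfolding forms_polygon_def by (auto simp: sum_diff1)

lemma forms_polygon_perturb: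
  fixes p w :: "nat \<Rightarrow> real" and e g :: real
  assumes "finite S" and close: "\<And>i. i \<in> S \<Longrightarrow> \<bar>p i - w i\<bar> \<le> e"
    and small: "(card S + 2) * e < g"
    and decisive: "(\<forall>i\<in>S. 2 * w i + g \<le> sum w S) \<or> (\<exists>i\<in>S. sum w S + g \<le> 2 * w i)"
  shows "forms_polygon p S \<longleftrightarrow> forms_polygon w S"
proof -
  have "\<bar>sum p S - sum w S\<bar> \<le> card S * e"
  proof -
    have "\<bar>sum p S - sum w S\<bar> \<le> (\<Sum>i\<in>S. \<bar>p i - w i\<bar>)"
      by (metis sum_abs sum_subtractf)
    also have "\<dots> \<le> card S * e"
      using sum_bounded_above[of S "\<lambda>i. \<bar>p i - w i\<bar>" e] close by simp
    finally show ?thesis .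
  qed
  then have margin: "\<bar>(2 * p i - sum p S) - (2 * w i - sum w S)\<bar> < g" if "i \<in> S" for i
    using close[OF that] small by (simp add: algebra_simps abs_le_iff abs_less_iff)
  from decisive show ?thesis
  proof
    assume "\<forall>i\<in>S. 2 * w i + g \<le> sum w S"
    then show ?thesis
      using margin \<open>finite S\<close> by (force simp: forms_polygon_iff abs_less_iff)
  next
    assume "\<exists>i\<in>S. sum w S + g \<le> 2 * w i"
    then show ?thesis
      using margin \<open>finite S\<close> by (force simp: forms_polygon_iff abs_less_iff)
  qed
qed

lemma pieces_close_to_increments:
  fixes P :: "nat \<Rightarrow> real"
  assumes "P 0 = 0" "P n = 1" "0 \<le> d"
    and gap: "\<And>i j. i < j \<Longrightarrow> j \<le> n \<Longrightarrow> P i + 2 * d < P j"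
    and x: "\<And>i. i < n - 1 \<Longrightarrow> \<bar>x i - P (Suc i)\<bar> \<le> d"
    and "i < n"
  shows "\<bar>pieces n x i - (P (Suc i) - P i)\<bar> \<le> 2 * d"
proof -
  define y where "y = 0 # map x [0..<n-1] @ [1]"
  have "sorted (map x [0..<n-1])"
  proof (subst sorted_iff_nth_mono_less, intro allI impI)
    fix i j assume "i < j" "j < length (map x [0..<n-1])"
    moreover from this have "P (Suc i) + 2 * d < P (Suc j)"
      by (intro gap) auto
    ultimately show "map x [0..<n-1] ! i \<le> map x [0..<n-1] ! j"
      using x[of i] x[of j] by (simp add: abs_le_iff)
  qed
  then have pieces_y: "pieces n x i = y ! Suc i - y ! i"
    by (simp add: pieces_def y_def sorted_sort_id)
  have y_close: "\<bar>y ! j - P j\<bar> \<le> d" if "j \<le> n" for j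
  proof -
    consider "j = 0" | "0 < j" "j < n" | "j = n" "0 < n" using \<open>j \<le> n\<close> by linarith
    then show ?thesis
    proof cases
      case 2
      then have "j - 1 < n - 1" by linarith
      with 2 x[of "j - 1"] show ?thesis by (simp add: y_def nth_append nth_Cons')
    qed (use assms in \<open>auto simp: y_def nth_append\<close>)
  qed
  show ?thesis
    using y_close[of i] y_close[of "Suc i"] \<open>i < n\<close> unfolding pieces_y by (simp add: abs_le_iff)
qed

lemma num_polygons_eq_if_close:
  fixes l :: "nat \<Rightarrow> int" and T e :: real
  assumes "0 < T"
    and close: "\<And>i. i < n \<Longrightarrow> \<bar>pieces n x i - l i / T\<bar> \<le> e"
    and small: "(k + 2) * e < 1 / T"
    and decisive: "\<And>S. S \<subseteq> {..<n} \<Longrightarrow> card S = k \<Longrightarrow>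
        (\<forall>i\<in>S. 2 * l i < sum l S) \<or> (\<exists>i\<in>S. sum l S < 2 * l i)"
  shows "num_polygons k n x = card {S. S \<subseteq> {..<n} \<and> card S = k \<and> (\<forall>i\<in>S. 2 * l i < sum l S)}"
proof -
  have "forms_polygon (pieces n x) S \<longleftrightarrow> (\<forall>i\<in>S. 2 * l i < sum l S)"
    if S: "S \<subseteq> {..<n}" "card S = k" for S
  proof -
    define w where "w i = l i / T" for i
    have "finite S" using S finite_subset by blast
    have sum_w: "sum w S = sum l S / T"
      by (simp add: w_def sum_divide_distrib)
    have scale: "2 * w i + 1 / T \<le> sum w S \<longleftrightarrow> 2 * l i + 1 \<le> sum l S"
      "sum w S + 1 / T \<le> 2 * w i \<longleftrightarrow> sum l S + 1 \<le> 2 * l i" for i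
      using \<open>0 < T\<close> unfolding sum_w w_def
      by (simp_all add: add_divide_distrib[symmetric] divide_le_cancel del: of_int_sum) linarith+
    have "forms_polygon (pieces n x) S \<longleftrightarrow> forms_polygon w S"
    proof (rule forms_polygon_perturb)
      show "(card S + 2) * e < 1 / T" using small S by (simp add: add.commute)
      show "(\<forall>i\<in>S. 2 * w i + 1 / T \<le> sum w S) \<or> (\<exists>i\<in>S. sum w S + 1 / T \<le> 2 * w i)"
        using decisive[OF S] unfolding scale by fastforce
    qed (use \<open>finite S\<close> S close in \<open>auto simp: w_def\<close>)
    also have "\<dots> \<longleftrightarrow> (\<forall>i\<in>S. 2 * l i < sum l S)"
      using \<open>finite S\<close> \<open>0 < T\<close> unfolding forms_polygon_iff[OF \<open>finite S\<close>] sum_w w_def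
      by (simp add: divide_less_cancel del: of_int_sum) (metis of_int_less_iff of_int_mult of_int_numeral)
    finally show ?thesis .
  qed
  then show ?thesis
    unfolding num_polygons_def by (intro arg_cong[where f = card]) auto
qed

lemma partial_sum_gap:
  fixes l :: "nat \<Rightarrow> int"
  assumes "\<And>i. i < n \<Longrightarrow> 0 < l i" "i < j" "j \<le> n"
  shows "sum l {..<i} < sum l {..<j}"
proof -
  have "sum l {..<j} = sum l {..<i} + sum l {i..<j}"
    using \<open>i < j\<close> by (simp add: lessThan_atLeast0 sum.atLeastLessThan_concat)
  moreover have "0 < sum l {i..<j}"
    using assms by (intro sum_pos) auto
  ultimately show ?thesis
    by linarith
qed

lemma normalized_partial_sum_gap:
  fixes l :: "nat \<Rightarrow> int" and n :: nat
  defines "T \<equiv> real_of_int (sum l {..<n})"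
  assumes pos: "\<And>i. i < n \<Longrightarrow> 0 < l i" and "i < j" "j \<le> n"
  shows "1 \<le> T" and "sum l {..<i} / T + 1 / T \<le> sum l {..<j} / T"
proof -
  show "1 \<le> T"
    using partial_sum_gap[of n l 0 n] pos \<open>i < j\<close> \<open>j \<le> n\<close> by (simp add: T_def del: of_int_sum)
  moreover have "real_of_int (sum l {..<i}) + 1 \<le> sum l {..<j}"
    using partial_sum_gap[where l = l and n = n, OF pos \<open>i < j\<close> \<open>j \<le> n\<close>] by linarith
  ultimately show "sum l {..<i} / T + 1 / T \<le> sum l {..<j} / T"
    by (simp add: add_divide_distrib[symmetric] divide_le_cancel del: of_int_sum)
qed

lemma num_polygons_eq_near_partial_sums:
  fixes l :: "nat \<Rightarrow> int" and n :: nat and d :: real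
  defines "T \<equiv> real_of_int (sum l {..<n})"
  assumes "0 < n" and pos: "\<And>i. i < n \<Longrightarrow> 0 < l i"
    and decisive: "\<And>S. S \<subseteq> {..<n} \<Longrightarrow> card S = k \<Longrightarrow>
        (\<forall>i\<in>S. 2 * l i < sum l S) \<or> (\<exists>i\<in>S. sum l S < 2 * l i)"
    and "0 \<le> d" and small: "(real k + 2) * (2 * d) < 1 / T"
    and x: "x \<in> PiE {..<n-1} (\<lambda>i. {sum l {..<Suc i} / T - d .. sum l {..<Suc i} / T + d})"
  shows "num_polygons k n x = card {S. S \<subseteq> {..<n} \<and> card S = k \<and> (\<forall>i\<in>S. 2 * l i < sum l S)}"
proof (rule num_polygons_eq_if_close[OF _ _ small decisive])
  define P where "P j = sum l {..<j} / T" for j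
  have gap: "P i + 1 / T \<le> P j" if "i < j" "j \<le> n" for i j
    using normalized_partial_sum_gap[OF pos that] by (simp add: P_def T_def)
  then have "1 \<le> T"
    using normalized_partial_sum_gap[OF pos \<open>0 < n\<close> order.refl] by (simp add: T_def)
  then show "0 < T"
    by simp
  have "1 * (2 * d) \<le> (real k + 2) * (2 * d)"
    using \<open>0 \<le> d\<close> by (intro mult_right_mono) auto
  with small have "2 * d < 1 / T"
    by linarith
  fix i assume "i < n"
  have "\<bar>pieces n x i - (P (Suc i) - P i)\<bar> \<le> 2 * d"
  proof (rule pieces_close_to_increments)
    show "P 0 = 0" "P n = 1"
      using \<open>1 \<le> T\<close> by (simp_all add: P_def T_def del: of_int_sum)
    show "P i + 2 * d < P j" if "i < j" "j \<le> n" for i j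
      using gap[OF that] \<open>2 * d < 1 / T\<close> by linarith
    show "\<bar>x i - P (Suc i)\<bar> \<le> d" if "i < n - 1" for i
    proof -
      have "x i \<in> {P (Suc i) - d .. P (Suc i) + d}"
        using x that by (auto simp: P_def PiE_iff)
      then show ?thesis
        by (simp add: abs_le_iff)
    qed
  qed (use \<open>0 \<le> d\<close> \<open>i < n\<close> in auto)
  moreover have "P (Suc i) - P i = l i / T"
    by (simp add: P_def add_divide_distrib)
  ultimately show "\<bar>pieces n x i - l i / T\<bar> \<le> 2 * d"
    by simp
qed

lemma measure_partial_sums_box_pos:
  fixes l :: "nat \<Rightarrow> int" and n :: nat and d :: real
  defines "T \<equiv> real_of_int (sum l {..<n})"
  assumes pos: "\<And>i. i < n \<Longrightarrow> 0 < l i" and "0 < d" "2 * d < 1 / T"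
  shows "0 < measure (break_points_measure n)
           (PiE {..<n-1} (\<lambda>i. {sum l {..<Suc i} / T - d .. sum l {..<Suc i} / T + d}))"
proof (rule measure_break_points_box_pos)
  define P where "P j = sum l {..<j} / T" for j
  fix i assume "i < n - 1"
  then have "P 0 + 1 / T \<le> P (Suc i)" and "P (Suc i) + 1 / T \<le> P n"
    unfolding P_def T_def by (intro normalized_partial_sum_gap(2)[where l = l and n = n, OF pos]; simp)+
  moreover have "1 \<le> T"
    using normalized_partial_sum_gap(1)[where l = l and n = n, OF pos, of 0 n] \<open>i < n - 1\<close>
    by (simp add: T_def)
  then have "P 0 = 0" "P n = 1"
    by (simp_all add: P_def T_def del: of_int_sum)
  ultimately show "0 \<le> P (Suc i) - d \<and> P (Suc i) - d < P (Suc i) + d \<and> P (Suc i) + d \<le> 1"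
    using \<open>0 < d\<close> \<open>2 * d < 1 / T\<close> by linarith
qed

lemma measure_num_polygons_eq_count_pos:
  fixes l :: "nat \<Rightarrow> int"
  assumes "0 < n" and pos: "\<And>i. i < n \<Longrightarrow> 0 < l i"
    and decisive: "\<And>S. S \<subseteq> {..<n} \<Longrightarrow> card S = k \<Longrightarrow>
        (\<forall>i\<in>S. 2 * l i < sum l S) \<or> (\<exists>i\<in>S. sum l S < 2 * l i)"
  shows "0 < measure (break_points_measure n) {x \<in> space (break_points_measure n).
           num_polygons k n x = card {S. S \<subseteq> {..<n} \<and> card S = k \<and> (\<forall>i\<in>S. 2 * l i < sum l S)}}"
    (is "0 < measure _ ?E")
proof -
  define T where "T = real_of_int (sum l {..<n})"
  define d where "d = 1 / ((2 * k + 5) * T)"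
  define Box where "Box = PiE {..<n-1} (\<lambda>i. {sum l {..<Suc i} / T - d .. sum l {..<Suc i} / T + d})"
  have "1 \<le> T"
    using normalized_partial_sum_gap[OF pos \<open>0 < n\<close> order.refl] by (simp add: T_def)
  then have "0 < d"
    by (simp add: d_def)
  have "(real k + 2) * (2 * d) = (2 * k + 4) / (2 * k + 5) * (1 / T)"
    by (simp add: d_def)
  also have "\<dots> < 1 * (1 / T)"
    using \<open>1 \<le> T\<close> by (intro mult_strict_right_mono) auto
  finally have small: "(real k + 2) * (2 * d) < 1 / T"
    by simp
  have "1 * (2 * d) \<le> (real k + 2) * (2 * d)"
    using \<open>0 < d\<close> by (intro mult_right_mono) auto
  with small have "2 * d < 1 / T"
    by linarith
  have "Box \<subseteq> ?E"
  proof
    fix x assume "x \<in> Box"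
    then have "x \<in> space (break_points_measure n)"
      by (auto simp: Box_def break_points_measure_def space_PiM PiE_iff)
    moreover have "num_polygons k n x = card {S. S \<subseteq> {..<n} \<and> card S = k \<and> (\<forall>i\<in>S. 2 * l i < sum l S)}"
      using num_polygons_eq_near_partial_sums[where d = d and x = x, OF \<open>0 < n\<close> pos decisive]
        small \<open>0 < d\<close> \<open>x \<in> Box\<close> by (simp add: T_def Box_def)
    ultimately show "x \<in> ?E"
      by simp
  qed
  moreover have "0 < measure (break_points_measure n) Box"
    unfolding Box_def T_def
    using measure_partial_sums_box_pos[OF pos \<open>0 < d\<close>] \<open>2 * d < 1 / T\<close> by (simp add: T_def)
  ultimately show ?thesis
    using finite_measure.finite_measure_mono[OF prob_space.finite_measure[OF prob_space_break_points_measure]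
        _ sets_num_polygons_eq] by (meson order_less_le_trans)
qed

lemma exists_binomial_bracket:
  assumes "0 < k" "0 < n" "m \<le> n choose k"
  shows "\<exists>q<n. q choose k \<le> m \<and> m \<le> Suc q choose k"
  using assms(2,3)
proof (induction n)
  case (Suc n)
  show ?case
  proof (cases "0 < n \<and> m \<le> n choose k")
    case True
    then show ?thesis using Suc.IH by (meson less_SucI)
  next
    case False
    then have "n choose k \<le> m"
      using \<open>0 < k\<close> by (cases "n = 0") (auto simp: binomial_eq_0)
    then show ?thesis using Suc.prems by blast
  qed
qed simp

lemma exists_threshold_card:
  fixes f :: "'a \<Rightarrow> nat"
  assumes "finite A" "inj_on f A" "j \<le> card A"
  shows "\<exists>t. card {a\<in>A. t \<le> f a} = j"
proof -
  define g where "g t = - int (card {a\<in>A. t \<le> f a})" for t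
  define M where "M = Suc (Max (f ` A))"
  have "\<bar>g (t + 1) - g t\<bar> \<le> 1" for t
  proof -
    have "{a\<in>A. t \<le> f a} = {a\<in>A. Suc t \<le> f a} \<union> {a\<in>A. f a = t}"
      by auto
    then have "card {a\<in>A. t \<le> f a} = card {a\<in>A. Suc t \<le> f a} + card {a\<in>A. f a = t}"
      using \<open>finite A\<close> by (simp add: card_Un_disjoint disjoint_iff)
    moreover have "card {a\<in>A. f a = t} \<le> 1"
      using \<open>finite A\<close> \<open>inj_on f A\<close> by (auto simp: card_le_Suc0_iff_eq inj_on_def)
    ultimately show ?thesis
      by (simp add: g_def)
  qed
  moreover have "g 0 \<le> - int j"
    using \<open>j \<le> card A\<close> by (simp add: g_def)
  moreover have "{a\<in>A. M \<le> f a} = {}"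
    using \<open>finite A\<close> by (auto simp: M_def not_le intro!: le_imp_less_Suc)
  then have "- int j \<le> g M"
    by (simp only: g_def card.empty)
  ultimately obtain t where "g t = - int j"
    using nat0_intermed_int_val[of M g "- int j"] by auto
  then show ?thesis
    by (auto simp: g_def)
qed

locale polygon_weights =
  fixes k q t :: nat
  assumes k_ge_3: "3 \<le> k"
begin

definition B :: int where "B = 2 ^ (q + 1)"

text \<open>A (k-1)-set T of pieces below q has total length 2 (k - 1) B + 2 set_encode T, so
  L < sum l T iff t \<le> set_encode T; equality is excluded because L is odd.\<close>

definition L :: int where "L = 2 * (int k - 1) * B + 2 * int t - 1"

definition W :: int where "W = (\<Sum>i<q. 2 * B + 2 * 2 ^ i) + L"

definition l :: "nat \<Rightarrow> int" where
  "l i = (if i < q then 2 * B + 2 * 2 ^ i else if i = q then L else (W + 1) * 2 ^ i)"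

lemma B_ge_2: "2 \<le> B"
  using power_increasing[of 1 "q + 1" "2::int"] by (simp add: B_def)

lemma l_small: "i < q \<Longrightarrow> 2 * B \<le> l i \<and> 2 * l i < 6 * B"
  using power_strict_increasing[of i q "2::int"] by (simp add: l_def B_def)

lemma four_B_le: "4 * B \<le> 2 * (int k - 1) * B"
  using k_ge_3 B_ge_2 mult_right_mono[of 4 "2 * (int k - 1)" B] by simp

lemma L_ge: "4 * B - 1 \<le> L"
  using four_B_le by (simp add: L_def)

lemma W_nonneg: "0 \<le> W"
proof -
  have "0 \<le> (\<Sum>i<q. 2 * B + 2 * 2 ^ i)"
    using B_ge_2 by (intro sum_nonneg) auto
  then show ?thesis
    using L_ge B_ge_2 by (simp add: W_def)
qed

lemma l_pos: "0 < l i"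
  using B_ge_2 L_ge W_nonneg by (auto simp: l_def add_pos_pos)

lemma sum_l_lt_tail:
  assumes "q < h"
  shows "sum l {..<h} < l h"
proof -
  have "Suc q \<le> h"
    using assms by simp
  then have "sum l {..<h} \<le> (W + 1) * 2 ^ h - 1"
  proof (induction h rule: nat_induct_at_least)
    case base
    have "sum l {..<q} = (\<Sum>i<q. 2 * B + 2 * 2 ^ i)"
      by (rule sum.cong) (auto simp: l_def)
    then have "sum l {..<Suc q} = W"
      by (simp add: W_def l_def)
    moreover have "W + 1 \<le> (W + 1) * 2 ^ Suc q"
      using mult_left_mono[OF one_le_power[of "2::int" "Suc q"], of "W + 1"] W_nonneg by simp
    ultimately show ?case
      by linarith
  next
    case (Suc h)
    then have "l h = (W + 1) * 2 ^ h"
      by (simp add: l_def)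
    with Suc.IH show ?case
      by (simp add: algebra_simps)
  qed
  then show ?thesis
    using assms by (simp add: l_def)
qed

lemma sum_l_small:
  assumes "T \<subseteq> {..<q}"
  shows "sum l T = 2 * B * int (card T) + 2 * int (set_encode T)"
proof -
  have "sum l T = (\<Sum>i\<in>T. 2 * B + 2 * 2 ^ i)"
    using assms by (intro sum.cong) (auto simp: l_def)
  also have "\<dots> = 2 * B * int (card T) + 2 * (\<Sum>i\<in>T. 2 ^ i)"
    by (simp add: sum.distrib sum_distrib_left)
  finally show ?thesis
    by (simp add: set_encode_def of_nat_sum)
qed

lemma tail_not_polygon:
  assumes "finite S" "h \<in> S" "q < h"
  shows "\<exists>i\<in>S. sum l S < 2 * l i"
proof
  let ?i = "Max S"
  show "?i \<in> S"
    using assms by (intro Max_in) auto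
  have "q < ?i"
    using assms Max_ge[of S h] by linarith
  have "S - {?i} \<subseteq> {..<?i}"
    using assms by (auto simp: order.strict_iff_order intro: Max_ge)
  then have "sum l (S - {?i}) \<le> sum l {..<?i}"
    using l_pos by (intro sum_mono2) (auto simp: less_imp_le)
  then show "sum l S < 2 * l ?i"
    using sum_l_lt_tail[OF \<open>q < ?i\<close>] sum.remove[OF \<open>finite S\<close> \<open>?i \<in> S\<close>, of l]
    by linarith
qed

lemma small_polygon:
  assumes "S \<subseteq> {..<q}" "3 \<le> card S"
  shows "\<forall>i\<in>S. 2 * l i < sum l S"
proof
  fix i assume "i \<in> S"
  have "2 * l i < 3 * (2 * B)"
    using l_small[of i] \<open>i \<in> S\<close> assms by auto
  also have "\<dots> \<le> of_nat (card S) * (2 * B)"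
    using assms B_ge_2 by (intro mult_right_mono) auto
  also have "\<dots> \<le> sum l S"
    using assms l_small by (intro sum_bounded_below) auto
  finally show "2 * l i < sum l S" .
qed

lemma sum_insert_q:
  assumes "T \<subseteq> {..<q}" "card T = k - 1"
  shows "sum l (insert q T) = L + 2 * (int k - 1) * B + 2 * int (set_encode T)"
proof -
  have "finite T" "q \<notin> T"
    using assms finite_subset by auto
  then have "sum l (insert q T) = l q + sum l T"
    by simp
  also have "\<dots> = L + 2 * B * (int k - 1) + 2 * int (set_encode T)"
    using sum_l_small[OF assms(1)] assms(2) k_ge_3 by (simp add: l_def of_nat_diff)
  finally show ?thesis
    by (simp add: algebra_simps)
qed

lemma insert_q_polygon:
  assumes "T \<subseteq> {..<q}" "card T = k - 1" "t \<le> set_encode T"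
  shows "\<forall>i\<in>insert q T. 2 * l i < sum l (insert q T)"
proof
  fix i assume "i \<in> insert q T"
  then consider "i = q" | "i < q"
    using assms by auto
  then show "2 * l i < sum l (insert q T)"
  proof cases
    case 1
    then show ?thesis
      using sum_insert_q[OF assms(1,2)] assms(3) by (simp add: l_def L_def)
  next
    case 2
    then show ?thesis
      using sum_insert_q[OF assms(1,2)] l_small[of i] four_B_le L_ge B_ge_2 by linarith
  qed
qed

lemma insert_q_not_polygon:
  assumes "T \<subseteq> {..<q}" "card T = k - 1" "set_encode T < t"
  shows "sum l (insert q T) < 2 * l q"
  using sum_insert_q[OF assms(1,2)] assms(3) by (simp add: l_def L_def)

definition polygon_sets :: "nat set set" where
  "polygon_sets = {S. S \<subseteq> {..<q} \<and> card S = k} \<union>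
     insert q ` {T. T \<subseteq> {..<q} \<and> card T = k - 1 \<and> t \<le> set_encode T}"

lemma polygon_sets_subset: "S \<in> polygon_sets \<Longrightarrow> S \<subseteq> {..q} \<and> card S = k"
  using k_ge_3 by (auto simp: polygon_sets_def card_insert_if finite_subset)

lemma insert_q_mem_polygon_sets_iff:
  assumes "T \<subseteq> {..<q}" "card T = k - 1"
  shows "insert q T \<in> polygon_sets \<longleftrightarrow> t \<le> set_encode T"
proof
  assume "insert q T \<in> polygon_sets"
  then obtain T' where "T' \<subseteq> {..<q}" "t \<le> set_encode T'" "insert q T = insert q T'"
    by (auto simp: polygon_sets_def)
  moreover from this have "T' = T"
    using assms(1) by (metis insert_ident lessThan_iff less_irrefl subsetD)
  ultimately show "t \<le> set_encode T"
    by simp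
qed (use assms in \<open>auto simp: polygon_sets_def\<close>)

lemma polygon_cases:
  assumes "finite S" "card S = k"
  obtains "S \<in> polygon_sets" "\<forall>i\<in>S. 2 * l i < sum l S"
    | "S \<notin> polygon_sets" "\<exists>i\<in>S. sum l S < 2 * l i"
proof -
  consider (tail) h where "h \<in> S" "q < h" | (small) "S \<subseteq> {..<q}" | (mid) "q \<in> S" "S \<subseteq> {..q}"
    by (metis atMost_iff lessThan_iff linorder_not_le order.order_iff_strict subsetI)
  then show ?thesis
  proof cases
    case tail
    then show ?thesis
      using that tail_not_polygon[OF \<open>finite S\<close>] polygon_sets_subset by fastforce
  next
    case small
    then show ?thesis
      using that small_polygon assms k_ge_3 by (simp add: polygon_sets_def)
  next
    case mid
    define T where "T = S - {q}"
    have T: "T \<subseteq> {..<q}" "card T = k - 1" and S_eq: "S = insert q T"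
      using mid assms by (auto simp: T_def)
    show ?thesis
    proof (cases "t \<le> set_encode T")
      case True
      then show ?thesis
        using that insert_q_polygon[OF T True] insert_q_mem_polygon_sets_iff[OF T] S_eq by blast
    next
      case False
      then show ?thesis
        using that insert_q_not_polygon[OF T] insert_q_mem_polygon_sets_iff[OF T] S_eq by auto
    qed
  qed
qed

lemma decisive:
  assumes "finite S" "card S = k"
  shows "(\<forall>i\<in>S. 2 * l i < sum l S) \<or> (\<exists>i\<in>S. sum l S < 2 * l i)"
  using assms by (cases rule: polygon_cases) auto

lemma polygon_iff_mem_polygon_sets:
  assumes "finite S" "card S = k"
  shows "(\<forall>i\<in>S. 2 * l i < sum l S) \<longleftrightarrow> S \<in> polygon_sets"
  using assms by (cases rule: polygon_cases) force+

lemma polygon_k_subsets_eq: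
  assumes "q < n"
  shows "{S. S \<subseteq> {..<n} \<and> card S = k \<and> (\<forall>i\<in>S. 2 * l i < sum l S)} = polygon_sets"
proof (intro set_eqI iffI)
  fix S assume "S \<in> {S. S \<subseteq> {..<n} \<and> card S = k \<and> (\<forall>i\<in>S. 2 * l i < sum l S)}"
  then show "S \<in> polygon_sets"
    using polygon_iff_mem_polygon_sets[of S] finite_subset[of S "{..<n}"] by simp
next
  fix S assume "S \<in> polygon_sets"
  moreover from this have "S \<subseteq> {..<n}" "card S = k"
    using polygon_sets_subset[of S] assms by auto
  ultimately show "S \<in> {S. S \<subseteq> {..<n} \<and> card S = k \<and> (\<forall>i\<in>S. 2 * l i < sum l S)}"
    using polygon_iff_mem_polygon_sets[of S] finite_subset[of S "{..<n}"] by simp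
qed

lemma card_polygon_sets:
  "card polygon_sets = (q choose k) + card {T. T \<subseteq> {..<q} \<and> card T = k - 1 \<and> t \<le> set_encode T}"
proof -
  let ?C = "{T. T \<subseteq> {..<q} \<and> card T = k - 1 \<and> t \<le> set_encode T}"
  have "finite ?C"
    by (rule finite_subset[of _ "Pow {..<q}"]) auto
  moreover have "inj_on (insert q) ?C"
    by (rule inj_onI) (metis insert_ident lessThan_iff less_irrefl mem_Collect_eq subsetD)
  moreover have "finite {S. S \<subseteq> {..<q} \<and> card S = k}"
    by (rule finite_subset[of _ "Pow {..<q}"]) auto
  moreover have "{S. S \<subseteq> {..<q} \<and> card S = k} \<inter> insert q ` ?C = {}"
    by auto
  ultimately show ?thesis
    unfolding polygon_sets_def by (simp add: card_Un_disjoint card_image n_subsets)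
qed

end

lemma exists_int_lengths_with_polygon_count:
  assumes "3 \<le> k" "k \<le> n" "m \<le> n choose k"
  obtains l :: "nat \<Rightarrow> int"
  where "\<And>i. 0 < l i"
    and "\<And>S. S \<subseteq> {..<n} \<Longrightarrow> card S = k \<Longrightarrow>
           (\<forall>i\<in>S. 2 * l i < sum l S) \<or> (\<exists>i\<in>S. sum l S < 2 * l i)"
    and "card {S. S \<subseteq> {..<n} \<and> card S = k \<and> (\<forall>i\<in>S. 2 * l i < sum l S)} = m"
proof -
  obtain q where "q < n" "q choose k \<le> m" "m \<le> Suc q choose k"
    using exists_binomial_bracket[of k n m] assms by auto
  define A where "A = {T. T \<subseteq> {..<q} \<and> card T = k - 1}"
  have "finite A"
    by (rule finite_subset[of _ "Pow {..<q}"]) (auto simp: A_def)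
  have "Suc q choose k = (q choose k) + card A"
    using \<open>3 \<le> k\<close> by (cases k) (simp_all add: A_def n_subsets)
  with \<open>m \<le> Suc q choose k\<close> have "m - (q choose k) \<le> card A"
    by linarith
  moreover have "inj_on set_encode A"
    by (rule inj_on_subset[OF inj_on_set_encode]) (auto simp: A_def intro: finite_subset)
  ultimately obtain t where t: "card {T\<in>A. t \<le> set_encode T} = m - (q choose k)"
    using exists_threshold_card[OF \<open>finite A\<close>] by blast
  interpret polygon_weights k q t
    using assms by unfold_locales
  show thesis
  proof (rule that)
    show "0 < l i" for i
      by (rule l_pos)
    show "(\<forall>i\<in>S. 2 * l i < sum l S) \<or> (\<exists>i\<in>S. sum l S < 2 * l i)"
      if "S \<subseteq> {..<n}" "card S = k" for S
      using decisive[OF finite_subset[OF that(1)] that(2)] by simp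
    show "card {S. S \<subseteq> {..<n} \<and> card S = k \<and> (\<forall>i\<in>S. 2 * l i < sum l S)} = m"
      using polygon_k_subsets_eq[OF \<open>q < n\<close>] card_polygon_sets t \<open>q choose k \<le> m\<close>
      by (simp add: A_def conj_assoc)
  qed
qed

theorem mainTheorem8:
  fixes k n m :: nat
  assumes "3 \<le> k" and "k \<le> n" and "m \<le> n choose k"
  shows "measure (break_points_measure n)
           {x \<in> space (break_points_measure n). num_polygons k n x = m} > 0"
proof -
  obtain l :: "nat \<Rightarrow> int" where pos: "\<And>i. 0 < l i"
    and decisive: "\<And>S. S \<subseteq> {..<n} \<Longrightarrow> card S = k \<Longrightarrow>
           (\<forall>i\<in>S. 2 * l i < sum l S) \<or> (\<exists>i\<in>S. sum l S < 2 * l i)"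
    and count: "card {S. S \<subseteq> {..<n} \<and> card S = k \<and> (\<forall>i\<in>S. 2 * l i < sum l S)} = m"
    using exists_int_lengths_with_polygon_count[OF assms] by blast
  have "0 < n"
    using assms by linarith
  then have "0 < measure (break_points_measure n) {x \<in> space (break_points_measure n).
      num_polygons k n x = card {S. S \<subseteq> {..<n} \<and> card S = k \<and> (\<forall>i\<in>S. 2 * l i < sum l S)}}"
    using pos decisive by (rule measure_num_polygons_eq_count_pos)
  then show ?thesis
    unfolding count .
qed

end
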